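(* There exist constants $\epsilon>0$, $c>0$ and $d_0>1$ such that for every $p=p(n)$ with $\frac{d_0}{n}\le p\le\frac{2\ln n}{n}$, a.a.s. every set $S\subseteq V(H_{n,p})$ inducing a connected subgraph, with $|S|\ge\frac{c\ln n}{d}$ and $d(S)\le\frac{d(H_{n,p})}{2}$, satisfies $e^{\mathrm{out}}(S)\ge\epsilon\,d\,|S|$.
   Context: $G_{n,p}$ is the random graph on $V_n=\{1,\dots,n\}$ with each possible edge present independently with probability $p$; $d=pn$; $H_{n,p}$ is the largest component of $G_{n,p}$; a.a.s. means with probability tending to $1$. For a vertex set $S$, $d(S)=\sum_{v\in S}d(v)$ is the sum of degrees, $d(H_{n,p})$ is the sum of degrees over all vertices of $H_{n,p}$, and $e^{\mathrm{out}}(S)$ is the number of edges with exactly one endpoint in $S$. *)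

theory Defs
  imports Complex_Main
begin

text \<open>Graphs on the vertex set {1..n} are represented by their edge sets:
  sets of 2-element subsets of {1..n}.\<close>

definition all_edges :: "nat \<Rightarrow> nat set set" where
  "all_edges n = {e. \<exists>u v. u \<in> {1..n} \<and> v \<in> {1..n} \<and> u \<noteq> v \<and> e = {u, v}}"

definition gnp_prob :: "nat \<Rightarrow> real \<Rightarrow> (nat set set \<Rightarrow> bool) \<Rightarrow> real" where
  "gnp_prob n p P =
     (\<Sum>E \<in> {E \<in> Pow (all_edges n). P E}.
        p ^ card E * (1 - p) ^ (card (all_edges n) - card E))"

definition degree :: "nat set set \<Rightarrow> nat \<Rightarrow> nat" where
  "degree E v = card {u. u \<noteq> v \<and> {u, v} \<in> E}"

definition deg_sum :: "nat set set \<Rightarrow> nat set \<Rightarrow> nat" where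
  "deg_sum E S = (\<Sum>v\<in>S. degree E v)"

definition e_out :: "nat set set \<Rightarrow> nat set \<Rightarrow> nat" where
  "e_out E S = card {e \<in> E. card (e \<inter> S) = 1}"

definition ind_rel :: "nat set set \<Rightarrow> nat set \<Rightarrow> (nat \<times> nat) set" where
  "ind_rel E A = {(x, y). x \<in> A \<and> y \<in> A \<and> x \<noteq> y \<and> {x, y} \<in> E}"

definition connected_set :: "nat set set \<Rightarrow> nat set \<Rightarrow> bool" where
  "connected_set E S \<longleftrightarrow> S \<noteq> {} \<and> (\<forall>u\<in>S. \<forall>v\<in>S. (u, v) \<in> (ind_rel E S)\<^sup>*)"

definition component :: "nat set set \<Rightarrow> nat \<Rightarrow> nat set \<Rightarrow> bool" where
  "component E n C \<longleftrightarrow>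
     (\<exists>v\<in>{1..n}. C = {u \<in> {1..n}. (v, u) \<in> (ind_rel E {1..n})\<^sup>*})"

definition largest_component :: "nat set set \<Rightarrow> nat \<Rightarrow> nat set \<Rightarrow> bool" where
  "largest_component E n H \<longleftrightarrow>
     component E n H \<and> (\<forall>C. component E n C \<longrightarrow> card C \<le> card H)"

end

theory Submission
  imports Defs "HOL-Library.FuncSet" "HOL-Real_Asymp.Real_Asymp"
begin

text \<open>A first-moment argument, with \<open>\<epsilon> = 1/80\<close>, \<open>c = 640\<close>, \<open>d\<^sub>0 = 160000\<close>. A violating set
  \<open>S\<close> of size \<open>k\<close> is small (\<open>k \<le> 19n/20\<close>) or large. A small one carries a spanning tree, and the
  chance that a given tree is present while fewer than \<open>dk/80\<close> of the at least \<open>kn/20\<close> boundary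
  pairs of \<open>S\<close> are edges is at most \<open>p^(k-1) exp(-dk/80)\<close>; this beats the at most
  \<open>(n choose k) k^k\<close> choices of \<open>S\<close> and tree as soon as \<open>k \<ge> 640 ln n / d\<close>. A large one satisfies
  \<open>d(S) \<le> d(H)/2 \<le> d(V - S)\<close>, so at most half of the edges lie inside \<open>S\<close> although \<open>S\<close> spans
  about 90% of all pairs; this has probability \<open>exp(-pn\<^sup>2/10)\<close>, beating the \<open>2^n\<close> choices of \<open>S\<close>.
  Both tail bounds are Chernoff bounds, i.e. Markov's inequality for an exponential moment, which
  factorises over the independent edges of \<open>G(n,p)\<close>.\<close>

definition inner_pairs :: "nat set \<Rightarrow> nat set set" where
  "inner_pairs S = {e. e \<subseteq> S \<and> card e = 2}"

lemma all_edges_eq_inner_pairs: "all_edges n = inner_pairs {1..n}"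
  unfolding all_edges_def inner_pairs_def by (auto simp: card_2_iff; blast)

lemma finite_inner_pairs: "finite S \<Longrightarrow> finite (inner_pairs S)"
  unfolding inner_pairs_def by (rule finite_subset[of _ "Pow S"]) auto

lemma finite_all_edges: "finite (all_edges n)"
  by (simp add: all_edges_eq_inner_pairs finite_inner_pairs)

lemma real_card_inner_pairs:
  assumes "finite S"
  shows "real (card (inner_pairs S)) = real (card S) * (real (card S) - 1) / 2"
proof -
  let ?k = "card S"
  have "card (inner_pairs S) = ?k * (?k - 1) div 2"
    unfolding inner_pairs_def using n_subsets[OF assms, of 2] by (simp add: choose_two)
  moreover have "even (?k * (?k - 1))" by (cases ?k) simp_all
  ultimately have "2 * real (card (inner_pairs S)) = real ?k * real (?k - 1)"
    by (metis dvd_mult_div_cancel of_nat_mult of_nat_numeral)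
  then show ?thesis by (cases ?k) auto
qed

lemma inner_pairs_subset_all_edges: "S \<subseteq> {1..n} \<Longrightarrow> inner_pairs S \<subseteq> all_edges n"
  unfolding all_edges_eq_inner_pairs inner_pairs_def by auto

definition gnp_weight :: "nat \<Rightarrow> real \<Rightarrow> nat set set \<Rightarrow> real" where
  "gnp_weight n p E = p ^ card E * (1 - p) ^ (card (all_edges n) - card E)"

definition gnp_expectation :: "nat \<Rightarrow> real \<Rightarrow> (nat set set \<Rightarrow> real) \<Rightarrow> real" where
  "gnp_expectation n p \<Phi> = (\<Sum>E\<in>Pow (all_edges n). gnp_weight n p E * \<Phi> E)"

lemma gnp_prob_eq_expectation: "gnp_prob n p P = gnp_expectation n p (\<lambda>E. if P E then 1 else 0)"
proof -
  have "gnp_expectation n p (\<lambda>E. if P E then 1 else 0)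
      = (\<Sum>E\<in>Pow (all_edges n). if P E then gnp_weight n p E else 0)"
    unfolding gnp_expectation_def by (rule sum.cong) auto
  also have "\<dots> = (\<Sum>E\<in>{E \<in> Pow (all_edges n). P E}. gnp_weight n p E)"
    using sum.inter_filter[of "Pow (all_edges n)" "gnp_weight n p" P] by (simp add: finite_all_edges)
  finally show ?thesis unfolding gnp_prob_def gnp_weight_def by simp
qed

lemma gnp_expectation_cong:
  "(\<And>E. E \<subseteq> all_edges n \<Longrightarrow> \<Phi> E = \<Psi> E) \<Longrightarrow> gnp_expectation n p \<Phi> = gnp_expectation n p \<Psi>"
  unfolding gnp_expectation_def by (rule sum.cong) auto

lemma gnp_expectation_mono:
  assumes "0 \<le> p" "p \<le> 1" "\<And>E. E \<subseteq> all_edges n \<Longrightarrow> \<Phi> E \<le> \<Psi> E"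
  shows "gnp_expectation n p \<Phi> \<le> gnp_expectation n p \<Psi>"
  unfolding gnp_expectation_def gnp_weight_def using assms by (auto intro!: sum_mono mult_left_mono)

lemma gnp_expectation_add:
  "gnp_expectation n p (\<lambda>E. \<Phi> E + \<Psi> E) = gnp_expectation n p \<Phi> + gnp_expectation n p \<Psi>"
  unfolding gnp_expectation_def by (simp add: distrib_left sum.distrib)

lemma gnp_expectation_sum:
  "gnp_expectation n p (\<lambda>E. \<Sum>i\<in>I. \<Phi> i E) = (\<Sum>i\<in>I. gnp_expectation n p (\<Phi> i))"
  unfolding gnp_expectation_def sum_distrib_left by (rule sum.swap)

lemma gnp_expectation_cmult: "gnp_expectation n p (\<lambda>E. c * \<Phi> E) = c * gnp_expectation n p \<Phi>"
  unfolding gnp_expectation_def by (simp add: sum_distrib_left mult_ac)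

lemma gnp_expectation_prod:
  fixes g :: "nat set \<Rightarrow> bool \<Rightarrow> real"
  shows "gnp_expectation n p (\<lambda>E. \<Prod>e\<in>all_edges n. g e (e \<in> E))
       = (\<Prod>e\<in>all_edges n. p * g e True + (1 - p) * g e False)"
proof -
  let ?N = "all_edges n"
  have "(\<Prod>e\<in>?N. p * g e True + (1 - p) * g e False)
     = (\<Sum>X\<in>Pow ?N. (\<Prod>e\<in>X. p * g e True) * (\<Prod>e\<in>?N - X. (1 - p) * g e False))"
    by (rule prod_add[OF finite_all_edges])
  also have "\<dots> = (\<Sum>X\<in>Pow ?N. gnp_weight n p X * (\<Prod>e\<in>?N. g e (e \<in> X)))"
  proof (rule sum.cong[OF refl])
    fix X assume "X \<in> Pow ?N"
    then have XN: "X \<subseteq> ?N" and fX: "finite X"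
      using finite_all_edges finite_subset by auto
    have "(\<Prod>e\<in>?N. g e (e \<in> X)) = (\<Prod>e\<in>X. g e (e \<in> X)) * (\<Prod>e\<in>?N - X. g e (e \<in> X))"
      using prod.subset_diff[OF XN finite_all_edges, of "\<lambda>e. g e (e \<in> X)"] by (simp add: mult.commute)
    also have "\<dots> = (\<Prod>e\<in>X. g e True) * (\<Prod>e\<in>?N - X. g e False)"
      by (intro arg_cong2[where f = "(*)"] prod.cong) auto
    finally show "(\<Prod>e\<in>X. p * g e True) * (\<Prod>e\<in>?N - X. (1 - p) * g e False)
        = gnp_weight n p X * (\<Prod>e\<in>?N. g e (e \<in> X))"
      using XN fX by (simp add: gnp_weight_def prod.distrib card_Diff_subset mult_ac)
  qed
  finally show ?thesis unfolding gnp_expectation_def by simp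
qed

lemma prod_indicator_power:
  assumes "finite N" "A \<subseteq> N"
  shows "(\<Prod>e\<in>N. if e \<in> A then c else 1) = (c :: 'a :: comm_monoid_mult) ^ card A"
  using prod.inter_restrict[OF assms(1), of "\<lambda>_. c" A] assms by (simp add: Int_absorb1)

lemma prod_indicator_subset:
  assumes "finite N" "F \<subseteq> N"
  shows "(\<Prod>e\<in>N. if e \<in> F then (if e \<in> E then 1 else 0) else 1) = (if F \<subseteq> E then 1 else (0::real))"
proof -
  have "(\<Prod>e\<in>N. if e \<in> F then (if e \<in> E then 1 else 0) else 1) = (\<Prod>e\<in>F. if e \<in> E then 1 else (0::real))"
    using prod.inter_restrict[OF assms(1), of "\<lambda>e. if e \<in> E then 1 else (0::real)" F] assms(2)
    by (simp add: Int_absorb1)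
  also have "\<dots> = (if F \<subseteq> E then 1 else 0)"
    using finite_subset[OF assms(2,1)] by (auto simp: prod_zero_iff subset_iff)
  finally show ?thesis .
qed

lemma gnp_expectation_forced_powers:
  assumes F: "F \<subseteq> all_edges n" and A: "A \<subseteq> all_edges n" and B: "B \<subseteq> all_edges n"
    and disjoint: "F \<inter> A = {}" "F \<inter> B = {}" "A \<inter> B = {}"
  shows "gnp_expectation n p (\<lambda>E. (if F \<subseteq> E then 1 else 0) * x ^ card (E \<inter> A) * y ^ card (E \<inter> B))
     = p ^ card F * (1 - p + p * x) ^ card A * (1 - p + p * y) ^ card B"
proof -
  let ?N = "all_edges n"
  define g where "g e b = (if e \<in> F then (if b then 1 else 0) else 1) *
      (if e \<in> A \<and> b then x else 1) * (if e \<in> B \<and> b then y else (1::real))" for e b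
  have "gnp_expectation n p (\<lambda>E. (if F \<subseteq> E then 1 else 0) * x ^ card (E \<inter> A) * y ^ card (E \<inter> B))
      = gnp_expectation n p (\<lambda>E. \<Prod>e\<in>?N. g e (e \<in> E))"
  proof (rule gnp_expectation_cong)
    fix E
    have "(\<Prod>e\<in>?N. if e \<in> A \<and> e \<in> E then x else 1) = x ^ card (E \<inter> A)"
      using prod_indicator_power[OF finite_all_edges, where A = "A \<inter> E" and c = x] A
      by (auto simp: Int_commute conj_commute)
    moreover have "(\<Prod>e\<in>?N. if e \<in> B \<and> e \<in> E then y else 1) = y ^ card (E \<inter> B)"
      using prod_indicator_power[OF finite_all_edges, where A = "B \<inter> E" and c = y] B
      by (auto simp: Int_commute conj_commute)
    ultimately show "(if F \<subseteq> E then 1 else 0) * x ^ card (E \<inter> A) * y ^ card (E \<inter> B)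
        = (\<Prod>e\<in>?N. g e (e \<in> E))"
      unfolding g_def prod.distrib prod_indicator_subset[OF finite_all_edges F] by simp
  qed
  also have "\<dots> = (\<Prod>e\<in>?N. p * g e True + (1 - p) * g e False)"
    by (rule gnp_expectation_prod)
  also have "\<dots> = (\<Prod>e\<in>?N. (if e \<in> F then p else 1) * (if e \<in> A then 1 - p + p * x else 1)
                              * (if e \<in> B then 1 - p + p * y else 1))"
    using disjoint by (intro prod.cong) (auto simp: g_def algebra_simps)
  also have "\<dots> = p ^ card F * (1 - p + p * x) ^ card A * (1 - p + p * y) ^ card B"
    unfolding prod.distrib using F A B by (simp add: prod_indicator_power finite_all_edges)
  finally show ?thesis .
qed

lemma gnp_expectation_const: "gnp_expectation n p (\<lambda>_. c) = c"
  using gnp_expectation_prod[of n p "\<lambda>_ _. 1"] gnp_expectation_cmult[of n p c "\<lambda>_. 1"] by simp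

lemma gnp_prob_add_compl: "gnp_prob n p P + gnp_prob n p (\<lambda>E. \<not> P E) = 1"
proof -
  have "gnp_prob n p P + gnp_prob n p (\<lambda>E. \<not> P E) = gnp_expectation n p (\<lambda>_. 1)"
    unfolding gnp_prob_eq_expectation gnp_expectation_add[symmetric]
    by (rule gnp_expectation_cong) simp
  then show ?thesis by (simp add: gnp_expectation_const)
qed

lemma gnp_prob_nonneg: "0 \<le> p \<Longrightarrow> p \<le> 1 \<Longrightarrow> 0 \<le> gnp_prob n p P"
  using gnp_expectation_mono[of p n "\<lambda>_. 0" "\<lambda>E. if P E then 1 else 0"]
  by (simp add: gnp_prob_eq_expectation gnp_expectation_const)

lemma gnp_prob_le_expectation:
  assumes "0 \<le> p" "p \<le> 1"
    and "\<And>E. E \<subseteq> all_edges n \<Longrightarrow> 0 \<le> \<Phi> E" "\<And>E. E \<subseteq> all_edges n \<Longrightarrow> P E \<Longrightarrow> 1 \<le> \<Phi> E"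
  shows "gnp_prob n p P \<le> gnp_expectation n p \<Phi>"
  unfolding gnp_prob_eq_expectation using assms by (intro gnp_expectation_mono) auto

lemma gnp_prob_mono:
  assumes "0 \<le> p" "p \<le> 1" "\<And>E. E \<subseteq> all_edges n \<Longrightarrow> P E \<Longrightarrow> Q E"
  shows "gnp_prob n p P \<le> gnp_prob n p Q"
  unfolding gnp_prob_eq_expectation using assms by (intro gnp_expectation_mono) auto

lemma gnp_prob_disj_le:
  assumes "0 \<le> p" "p \<le> 1"
  shows "gnp_prob n p (\<lambda>E. P E \<or> Q E) \<le> gnp_prob n p P + gnp_prob n p Q"
  unfolding gnp_prob_eq_expectation gnp_expectation_add[symmetric]
  using assms by (intro gnp_expectation_mono) auto

lemma gnp_prob_Bex_le:
  assumes "0 \<le> p" "p \<le> 1" "finite I"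
  shows "gnp_prob n p (\<lambda>E. \<exists>i\<in>I. P i E) \<le> (\<Sum>i\<in>I. gnp_prob n p (P i))"
  unfolding gnp_prob_eq_expectation gnp_expectation_sum[symmetric]
proof (rule gnp_expectation_mono[OF assms(1,2)])
  fix E
  show "(if \<exists>i\<in>I. P i E then 1 else 0) \<le> (\<Sum>i\<in>I. if P i E then 1 else (0::real))"
  proof (cases "\<exists>i\<in>I. P i E")
    case True
    then obtain i where "i \<in> I" "P i E" by blast
    then have "(if P i E then 1 else 0) \<le> (\<Sum>i\<in>I. if P i E then 1 else (0::real))"
      by (intro member_le_sum) (auto simp: assms(3))
    with True \<open>P i E\<close> show ?thesis by simp
  qed (simp add: sum_nonneg)
qed

lemma degree_eq_card_incident:
  assumes "E \<subseteq> all_edges n"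
  shows "degree E v = card {e \<in> E. v \<in> e}"
  unfolding degree_def
proof (rule bij_betw_same_card)
  have "e \<in> (\<lambda>u. {u, v}) ` {u. u \<noteq> v \<and> {u, v} \<in> E}" if "e \<in> E" "v \<in> e" for e
  proof -
    obtain a b where "e = {a, b}" "a \<noteq> b" using \<open>e \<in> E\<close> assms unfolding all_edges_def by blast
    with that show ?thesis by (cases "v = a") (auto simp: insert_commute)
  qed
  then show "bij_betw (\<lambda>u. {u, v}) {u. u \<noteq> v \<and> {u, v} \<in> E} {e \<in> E. v \<in> e}"
    unfolding bij_betw_def inj_on_def by (auto simp: doubleton_eq_iff)
qed

lemma deg_sum_eq_sum_card_Int:
  assumes E: "E \<subseteq> all_edges n" and A: "finite A"
  shows "deg_sum E A = (\<Sum>e\<in>E. card (e \<inter> A))"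
proof -
  have fE: "finite E" using E finite_all_edges finite_subset by blast
  have "deg_sum E A = (\<Sum>v\<in>A. \<Sum>e\<in>E. if v \<in> e then 1 else 0)"
    unfolding deg_sum_def degree_eq_card_incident[OF E] using fE by (simp add: sum.If_cases Int_def)
  also have "\<dots> = (\<Sum>e\<in>E. \<Sum>v\<in>A. if v \<in> e then 1 else 0)" by (rule sum.swap)
  also have "\<dots> = (\<Sum>e\<in>E. card (e \<inter> A))"
    using A by (simp add: sum.If_cases Int_commute)
  finally show ?thesis .
qed

definition boundary_pairs :: "nat \<Rightarrow> nat set \<Rightarrow> nat set set" where
  "boundary_pairs n S = {e \<in> all_edges n. card (e \<inter> S) = 1}"

lemma e_out_eq_card_boundary: "E \<subseteq> all_edges n \<Longrightarrow> e_out E S = card (E \<inter> boundary_pairs n S)"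
  unfolding e_out_def boundary_pairs_def by (rule arg_cong[where f = card]) auto

lemma card_boundary_pairs_ge:
  assumes "S \<subseteq> {1..n}"
  shows "card S * (n - card S) \<le> card (boundary_pairs n S)"
proof -
  have "card S * (n - card S) = card (S \<times> ({1..n} - S))"
    using assms by (simp add: card_cartesian_product card_Diff_subset finite_subset)
  also have "\<dots> = card ((\<lambda>(a, b). {a, b}) ` (S \<times> ({1..n} - S)))"
    by (rule card_image[symmetric]) (auto simp: inj_on_def doubleton_eq_iff)
  also have "\<dots> \<le> card (boundary_pairs n S)"
  proof (rule card_mono)
    show "finite (boundary_pairs n S)" unfolding boundary_pairs_def using finite_all_edges by simp
    have "{a, b} \<in> boundary_pairs n S" if "a \<in> S" "b \<in> {1..n} - S" for a b
    proof -
      have "{a, b} \<inter> S = {a}" using that by auto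
      moreover have "{a, b} \<in> all_edges n" unfolding all_edges_def using that assms by blast
      ultimately show ?thesis unfolding boundary_pairs_def by simp
    qed
    then show "(\<lambda>(a, b). {a, b}) ` (S \<times> ({1..n} - S)) \<subseteq> boundary_pairs n S" by auto
  qed
  finally show ?thesis .
qed

lemma card_boundary_pairs_ge_small:
  assumes S: "S \<subseteq> {1..n}" and small: "real (card S) \<le> 19 / 20 * n"
  shows "real (card S) * (n / 20) \<le> card (boundary_pairs n S)"
proof -
  have "real n / 20 \<le> real (n - card S)"
    using small card_mono[OF _ S] by (simp add: of_nat_diff)
  then have "real (card S) * (n / 20) \<le> real (card S) * real (n - card S)"
    by (rule mult_left_mono) simp
  also have "\<dots> \<le> card (boundary_pairs n S)"
    using card_boundary_pairs_ge[OF S] by (metis of_nat_le_iff of_nat_mult)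
  finally show ?thesis .
qed

lemma card_inner_edges_le_other_edges:
  assumes E: "E \<subseteq> all_edges n" and S: "S \<subseteq> {1..n}"
    and deg: "deg_sum E S \<le> deg_sum E ({1..n} - S)"
  shows "card (E \<inter> inner_pairs S) \<le> card (E - inner_pairs S)"
proof -
  let ?R = "inner_pairs S"
  have fE: "finite E" using E finite_all_edges finite_subset by blast
  have card_e: "card e = 2" if "e \<in> E" for e
    using that E unfolding all_edges_eq_inner_pairs inner_pairs_def by auto
  have split: "(\<Sum>e\<in>E. g e) = (\<Sum>e\<in>E \<inter> ?R. g e) + (\<Sum>e\<in>E - ?R. g e)" for g :: "nat set \<Rightarrow> nat"
    using fE by (metis sum.Int_Diff)
  have "2 * card (E \<inter> ?R) = (\<Sum>e\<in>E \<inter> ?R. card (e \<inter> S))"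
    by (simp add: inner_pairs_def Int_absorb2)
  also have "\<dots> \<le> deg_sum E S"
    using split[of "\<lambda>e. card (e \<inter> S)"] deg_sum_eq_sum_card_Int[OF E] S
    by (simp add: finite_subset)
  also have "\<dots> \<le> deg_sum E ({1..n} - S)" by (rule deg)
  also have "\<dots> = (\<Sum>e\<in>E - ?R. card (e \<inter> ({1..n} - S)))"
    using split[of "\<lambda>e. card (e \<inter> ({1..n} - S))"] deg_sum_eq_sum_card_Int[OF E]
    by (auto simp: inner_pairs_def intro!: sum.neutral)
  also have "\<dots> \<le> (\<Sum>e\<in>E - ?R. 2)"
    using card_e by (intro sum_mono) (metis DiffD1 card.infinite card_mono inf_le1 zero_neq_numeral)
  finally show ?thesis by simp
qed

lemma deg_sum_le_complement:
  assumes H: "largest_component E n H" and SH: "S \<subseteq> H"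
    and deg: "real (deg_sum E S) \<le> real (deg_sum E H) / 2"
  shows "deg_sum E S \<le> deg_sum E ({1..n} - S)"
proof -
  have HV: "H \<subseteq> {1..n}" using H unfolding largest_component_def component_def by auto
  have "deg_sum E H \<le> deg_sum E {1..n}" unfolding deg_sum_def using HV by (intro sum_mono2) auto
  also have "\<dots> = deg_sum E ({1..n} - S) + deg_sum E S"
    unfolding deg_sum_def using HV SH by (intro sum.subset_diff) auto
  finally show ?thesis using deg by linarith
qed

text \<open>A spanning tree of \<open>S\<close> rooted at \<open>r\<close> is encoded by a parent map \<open>f\<close>, its edges being the pairs
  \<open>{x, f x}\<close> for \<open>x \<noteq> r\<close>; counting maps \<open>S \<rightarrow> S\<close> (at most \<open>|S|^|S|\<close>) replaces Cayley's formula.\<close>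
definition parent_maps :: "nat set \<Rightarrow> nat \<Rightarrow> (nat \<Rightarrow> nat) set" where
  "parent_maps S r = {f \<in> S \<rightarrow>\<^sub>E S. (\<forall>x\<in>S - {r}. f x \<noteq> x) \<and> inj_on (\<lambda>x. {x, f x}) (S - {r})}"

definition tree_edges :: "nat set \<Rightarrow> nat \<Rightarrow> (nat \<Rightarrow> nat) \<Rightarrow> nat set set" where
  "tree_edges S r f = (\<lambda>x. {x, f x}) ` (S - {r})"

lemma card_parent_maps_le:
  assumes "finite S"
  shows "card (parent_maps S r) \<le> card S ^ card S"
proof -
  have "card (parent_maps S r) \<le> card (S \<rightarrow>\<^sub>E S)"
    unfolding parent_maps_def using assms by (intro card_mono) (auto simp: finite_PiE)
  then show ?thesis using assms by (simp add: card_funcsetE)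
qed

lemma card_tree_edges:
  "f \<in> parent_maps S r \<Longrightarrow> r \<in> S \<Longrightarrow> finite S \<Longrightarrow> card (tree_edges S r f) = card S - 1"
  unfolding parent_maps_def tree_edges_def by (auto simp: card_image)

lemma tree_edges_subset_inner_pairs:
  assumes "f \<in> parent_maps S r"
  shows "tree_edges S r f \<subseteq> inner_pairs S"
proof
  fix e assume "e \<in> tree_edges S r f"
  then obtain x where x: "x \<in> S - {r}" and e: "e = {x, f x}" unfolding tree_edges_def by blast
  have "f x \<in> S" "f x \<noteq> x" using assms x unfolding parent_maps_def by auto
  then show "e \<in> inner_pairs S" using x e unfolding inner_pairs_def by auto
qed

text \<open>The parent of \<open>x\<close> is a neighbour strictly closer to \<open>r\<close>; this makes \<open>x \<mapsto> {x, f x}\<close> injective.\<close>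
lemma connected_set_parent_map:
  assumes conn: "connected_set E S" and r: "r \<in> S"
  shows "\<exists>f\<in>parent_maps S r. tree_edges S r f \<subseteq> E"
proof -
  let ?R = "ind_rel E S"
  define dist where "dist x = (LEAST k. (r, x) \<in> ?R ^^ k)" for x
  have reach: "(r, x) \<in> ?R ^^ dist x" if "x \<in> S" for x
  proof -
    have "(r, x) \<in> ?R\<^sup>*" using conn r that unfolding connected_set_def by blast
    then obtain k where "(r, x) \<in> ?R ^^ k" using rtrancl_power by blast
    then show ?thesis unfolding dist_def by (rule LeastI)
  qed
  have closer: "\<exists>y. y \<in> S \<and> y \<noteq> x \<and> {y, x} \<in> E \<and> dist y < dist x" if x: "x \<in> S - {r}" for x
  proof -
    have rx: "(r, x) \<in> ?R ^^ dist x" using reach x by blast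
    then obtain j where j: "dist x = Suc j" using x by (cases "dist x") auto
    then obtain y where y1: "(r, y) \<in> ?R ^^ j" and y2: "(y, x) \<in> ?R"
      using rx by (auto elim: relpow_Suc_E)
    have "dist y \<le> j" unfolding dist_def using y1 by (rule Least_le)
    then show ?thesis using y2 j unfolding ind_rel_def by (intro exI[of _ y]) auto
  qed
  define f where "f = restrict (\<lambda>x. if x = r then r
      else (SOME y. y \<in> S \<and> y \<noteq> x \<and> {y, x} \<in> E \<and> dist y < dist x)) S"
  have fx: "f x \<in> S \<and> f x \<noteq> x \<and> {x, f x} \<in> E \<and> dist (f x) < dist x" if "x \<in> S - {r}" for x
    using someI_ex[OF closer[OF that]] that by (simp add: f_def insert_commute)
  have "inj_on (\<lambda>x. {x, f x}) (S - {r})"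
  proof (rule inj_onI)
    fix x x' assume x: "x \<in> S - {r}" and x': "x' \<in> S - {r}" and eq: "{x, f x} = {x', f x'}"
    show "x = x'"
    proof (rule ccontr)
      assume "x \<noteq> x'"
      then have "x = f x' \<and> f x = x'" using eq by (auto simp: doubleton_eq_iff)
      then show False using fx[OF x] fx[OF x'] by auto
    qed
  qed
  moreover have "f \<in> S \<rightarrow>\<^sub>E S" using fx r by (auto simp: f_def)
  ultimately show ?thesis using fx unfolding parent_maps_def tree_edges_def by auto
qed

lemma power_bernoulli_factor_le_exp:
  fixes p x :: real
  assumes "0 \<le> 1 - p + p * x"
  shows "(1 - p + p * x) ^ m \<le> exp (p * (x - 1) * m)"
proof -
  have "(1 - p + p * x) ^ m \<le> exp (p * (x - 1)) ^ m"
    using exp_ge_add_one_self[of "p * (x - 1)"] assms by (intro power_mono) (auto simp: algebra_simps)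
  then show ?thesis by (simp add: exp_of_nat_mult[symmetric] mult.commute)
qed

lemma power_bernoulli_exp_neg_one_le:
  fixes p :: real
  assumes "0 \<le> p" "p \<le> 1"
  shows "(1 - p + p * exp (-1)) ^ m \<le> exp (- (p / 2 * m))"
proof -
  have "exp (-1) \<le> (1 / 2 :: real)"
    using exp_ge_add_one_self[of 1] by (simp add: exp_minus field_simps)
  then have "p * exp (-1) \<le> p * (1 / 2)" using assms by (intro mult_left_mono) auto
  then have weight: "p * (exp (-1) - 1) * m \<le> - p / 2 * m"
    by (intro mult_right_mono) (auto simp: algebra_simps)
  have "(1 - p + p * exp (-1)) ^ m \<le> exp (p * (exp (-1) - 1) * m)"
    using assms by (intro power_bernoulli_factor_le_exp) (simp add: add_nonneg_nonneg)
  also have "\<dots> \<le> exp (- (p / 2 * m))" using weight by simp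
  finally show ?thesis .
qed

lemma prob_tree_few_boundary_edges:
  fixes p :: real
  assumes S: "S \<subseteq> {1..n}" and small: "real (card S) \<le> 19 / 20 * n"
    and F: "F \<subseteq> inner_pairs S" and p: "0 \<le> p" "p \<le> 1"
  shows "gnp_prob n p (\<lambda>E. F \<subseteq> E \<and> real (card (E \<inter> boundary_pairs n S)) < p * n * card S / 80)
    \<le> p ^ card F * exp (- (p * n * card S / 80))"
proof -
  let ?B = "boundary_pairs n S"
  let ?t = "p * n * card S / 80"
  define \<Phi> where "\<Phi> E = exp ?t * ((if F \<subseteq> E then 1 else 0) * exp (-1) ^ card (E \<inter> ?B))" for E
  have FN: "F \<subseteq> all_edges n" using F inner_pairs_subset_all_edges[OF S] by blast
  have BN: "?B \<subseteq> all_edges n" unfolding boundary_pairs_def by auto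
  have FB: "F \<inter> ?B = {}"
    using F unfolding inner_pairs_def boundary_pairs_def by (auto simp: Int_absorb2)
  have "gnp_prob n p (\<lambda>E. F \<subseteq> E \<and> real (card (E \<inter> ?B)) < ?t) \<le> gnp_expectation n p \<Phi>"
  proof (rule gnp_prob_le_expectation[OF p])
    fix E assume "F \<subseteq> E \<and> real (card (E \<inter> ?B)) < ?t"
    then have "1 \<le> exp (?t - card (E \<inter> ?B))" by simp
    then show "1 \<le> \<Phi> E"
      using \<open>F \<subseteq> E \<and> _\<close> by (simp add: \<Phi>_def exp_diff exp_of_nat_mult[symmetric] exp_minus field_simps)
  qed (simp add: \<Phi>_def)
  also have "gnp_expectation n p \<Phi> = exp ?t * gnp_expectation n p
      (\<lambda>E. (if F \<subseteq> E then 1 else 0) * exp (-1) ^ card (E \<inter> ?B) * 1 ^ card (E \<inter> {}))"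
    by (simp add: \<Phi>_def[abs_def] flip: gnp_expectation_cmult)
  also have "\<dots> = exp ?t * (p ^ card F * (1 - p + p * exp (-1)) ^ card ?B)"
    using FN BN FB by (subst gnp_expectation_forced_powers) auto
  also have "\<dots> \<le> exp ?t * (p ^ card F * exp (- (2 * ?t)))"
  proof -
    have "p / 2 * (real (card S) * (n / 20)) \<le> p / 2 * card ?B"
      using card_boundary_pairs_ge_small[OF S small] p by (intro mult_left_mono) auto
    then have "2 * ?t \<le> p / 2 * card ?B" by simp
    have "(1 - p + p * exp (-1)) ^ card ?B \<le> exp (- (p / 2 * card ?B))"
      by (rule power_bernoulli_exp_neg_one_le[OF p])
    also have "\<dots> \<le> exp (- (2 * ?t))" using \<open>2 * ?t \<le> p / 2 * card ?B\<close> by simp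
    finally have "(1 - p + p * exp (-1)) ^ card ?B \<le> exp (- (2 * ?t))" .
    then show ?thesis using p by (intro mult_left_mono) auto
  qed
  also have "\<dots> = p ^ card F * exp (- ?t)" by (simp add: mult_ac flip: exp_add)
  finally show ?thesis .
qed

lemma prob_connected_few_out_edges:
  fixes p :: real
  assumes S: "S \<subseteq> {1..n}" and small: "real (card S) \<le> 19 / 20 * n" and p: "0 \<le> p" "p \<le> 1"
  shows "gnp_prob n p (\<lambda>E. connected_set E S \<and> real (e_out E S) < p * n * card S / 80)
    \<le> real (card S) ^ card S * p ^ (card S - 1) * exp (- (p * n * card S / 80))"
proof (cases "S = {}")
  case True
  then show ?thesis by (simp add: gnp_prob_def connected_set_def)
next
  case False
  then obtain r where r: "r \<in> S" by blast
  have finS: "finite S" using S finite_subset by blast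
  let ?bound = "p ^ (card S - 1) * exp (- (p * n * card S / 80))"
  have "gnp_prob n p (\<lambda>E. connected_set E S \<and> real (e_out E S) < p * n * card S / 80)
      \<le> gnp_prob n p (\<lambda>E. \<exists>f\<in>parent_maps S r. tree_edges S r f \<subseteq> E \<and>
            real (card (E \<inter> boundary_pairs n S)) < p * n * card S / 80)"
    using connected_set_parent_map[OF _ r] e_out_eq_card_boundary by (intro gnp_prob_mono[OF p]) metis
  also have "\<dots> \<le> (\<Sum>f\<in>parent_maps S r. gnp_prob n p (\<lambda>E. tree_edges S r f \<subseteq> E \<and>
            real (card (E \<inter> boundary_pairs n S)) < p * n * card S / 80))"
    using finS by (intro gnp_prob_Bex_le[OF p]) (simp add: parent_maps_def finite_PiE)
  also have "\<dots> \<le> (\<Sum>f\<in>parent_maps S r. ?bound)"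
  proof (rule sum_mono)
    fix f assume f: "f \<in> parent_maps S r"
    show "gnp_prob n p (\<lambda>E. tree_edges S r f \<subseteq> E \<and>
            real (card (E \<inter> boundary_pairs n S)) < p * n * card S / 80) \<le> ?bound"
      using prob_tree_few_boundary_edges[OF S small tree_edges_subset_inner_pairs[OF f] p]
      by (simp add: card_tree_edges[OF f r finS])
  qed
  also have "\<dots> \<le> real (card S) ^ card S * ?bound"
    using card_parent_maps_le[OF finS, of r] p by (simp add: mult_right_mono flip: of_nat_power)
  finally show ?thesis by (simp add: mult_ac)
qed

lemma card_non_inner_pairs_sub_half_inner_le:
  assumes S: "S \<subseteq> {1..n}" and big: "19 / 20 * n \<le> real (card S)" and n: "3 \<le> n"
  shows "real (card (all_edges n - inner_pairs S)) - card (inner_pairs S) / 2 \<le> - (real n * real n / 10)"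
proof -
  let ?R = "inner_pairs S"
  define X where "X = real (card S) * (real (card S) - 1)"
  define Y where "Y = real n * real n"
  have RN: "?R \<subseteq> all_edges n" by (rule inner_pairs_subset_all_edges[OF S])
  have R: "real (card ?R) = X / 2"
    unfolding X_def using S by (intro real_card_inner_pairs) (auto intro: finite_subset)
  have N: "real (card (all_edges n)) = (Y - n) / 2"
    using real_card_inner_pairs[of "{1..n}"] by (simp add: all_edges_eq_inner_pairs Y_def algebra_simps)
  have M: "real (card (all_edges n - ?R)) = real (card (all_edges n)) - real (card ?R)"
    using card_Diff_subset[OF finite_subset[OF RN finite_all_edges] RN] card_mono[OF finite_all_edges RN]
    by (simp add: of_nat_diff)
  have "19 / 20 * n * (19 / 20 * n - 1) \<le> X"
    using big n unfolding X_def by (intro mult_mono) auto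
  then have "361 / 400 * Y - 19 / 20 * n \<le> X" by (simp add: Y_def algebra_simps)
  moreover have "3 * real n \<le> Y" using n unfolding Y_def by (intro mult_right_mono) auto
  ultimately show ?thesis
    unfolding Y_def[symmetric] using M N R of_nat_0_le_iff[of n, where 'a = real] by argo
qed

lemma prob_inner_edges_minority:
  fixes p :: real
  assumes S: "S \<subseteq> {1..n}" and big: "19 / 20 * n \<le> real (card S)" and n: "3 \<le> n"
    and p: "0 \<le> p" "p \<le> 1"
  shows "gnp_prob n p (\<lambda>E. card (E \<inter> inner_pairs S) \<le> card (E - inner_pairs S))
    \<le> exp (- (p * n * n / 10))"
proof -
  let ?R = "inner_pairs S"
  let ?M = "all_edges n - inner_pairs S"
  define \<Phi> where "\<Phi> E = (2::real) ^ card (E \<inter> ?M) * (1 / 2) ^ card (E \<inter> ?R)" for E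
  have RN: "?R \<subseteq> all_edges n" by (rule inner_pairs_subset_all_edges[OF S])
  have "gnp_prob n p (\<lambda>E. card (E \<inter> ?R) \<le> card (E - ?R)) \<le> gnp_expectation n p \<Phi>"
  proof (rule gnp_prob_le_expectation[OF p])
    fix E assume "E \<subseteq> all_edges n" "card (E \<inter> ?R) \<le> card (E - ?R)"
    moreover have "E - ?R = E \<inter> ?M" using \<open>E \<subseteq> all_edges n\<close> by blast
    ultimately have "card (E \<inter> ?R) \<le> card (E \<inter> ?M)" by simp
    then have "(2::real) ^ card (E \<inter> ?R) \<le> 2 ^ card (E \<inter> ?M)" by (rule power_increasing) simp
    then show "1 \<le> \<Phi> E" by (simp add: \<Phi>_def power_one_over field_simps)
  qed (simp add: \<Phi>_def)
  also have "gnp_expectation n p \<Phi> = gnp_expectation n p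
      (\<lambda>E. (if {} \<subseteq> E then 1 else 0) * 2 ^ card (E \<inter> ?M) * (1 / 2) ^ card (E \<inter> ?R))"
    by (simp add: \<Phi>_def[abs_def])
  also have "\<dots> = (1 - p + p * 2) ^ card ?M * (1 - p + p * (1 / 2)) ^ card ?R"
    using RN by (subst gnp_expectation_forced_powers) auto
  also have "\<dots> \<le> exp (p * card ?M) * exp (- (p / 2 * card ?R))"
    using power_bernoulli_factor_le_exp[of p 2 "card ?M"] power_bernoulli_factor_le_exp[of p "1 / 2" "card ?R"] p
    by (intro mult_mono) (auto simp: algebra_simps)
  also have "\<dots> = exp (p * (card ?M - card ?R / 2))" by (simp add: algebra_simps flip: exp_add)
  also have "\<dots> \<le> exp (- (p * n * n / 10))"
    using mult_left_mono[OF card_non_inner_pairs_sub_half_inner_le[OF S big n] p(1)] by simp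
  finally show ?thesis .
qed

lemma pow_div_fact_le_exp:
  fixes x :: real
  assumes "0 \<le> x"
  shows "x ^ k / fact k \<le> exp x"
proof -
  have "(\<Sum>i\<in>{k}. x ^ i /\<^sub>R fact i) \<le> (\<Sum>i. x ^ i /\<^sub>R fact i)"
    using assms by (intro sum_le_suminf summable_exp_generic) auto
  then show ?thesis by (simp add: exp_def divide_inverse mult.commute)
qed

lemma binomial_mult_pow_le:
  assumes "k \<le> n"
  shows "real (n choose k) * real k ^ k \<le> (exp 1 * real n) ^ k"
proof -
  have "fact n = fact k * (n choose k) * (fact (n - k) :: nat)"
    using binomial_fact_lemma[OF assms] by (simp add: mult_ac)
  then have "fact n div fact (n - k) = fact k * (n choose k)" by simp
  then have "fact k * (n choose k) \<le> n ^ k" using fact_div_fact_le_pow[OF assms] by simp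
  then have choose: "fact k * real (n choose k) \<le> real n ^ k"
    by (metis of_nat_fact of_nat_le_iff of_nat_mult of_nat_power)
  have "real k ^ k \<le> exp (real k) * fact k"
    using pow_div_fact_le_exp[of "real k" k] by (simp add: divide_le_eq)
  then have "real (n choose k) * real k ^ k \<le> real (n choose k) * (exp (real k) * fact k)"
    by (rule mult_left_mono) simp
  also have "\<dots> = exp (real k) * (fact k * real (n choose k))" by simp
  also have "\<dots> \<le> exp (real k) * real n ^ k" using choose by simp
  also have "exp (real k) = exp 1 ^ k" by (simp flip: exp_of_nat_mult)
  finally show ?thesis by (simp add: power_mult_distrib)
qed

lemma one_plus_ln_le:
  fixes d :: real
  assumes "160000 \<le> d"
  shows "1 + ln d \<le> d / 160"
proof -
  have "ln d = ln (d / 400) + ln 400" using assms by (simp add: ln_div)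
  also have "\<dots> \<le> (d / 400 - 1) + (400 - 1)"
    using assms by (intro add_mono ln_le_minus_one) auto
  finally show ?thesis using assms by simp
qed

lemma small_sets_term_le:
  fixes p :: real
  assumes n: "2 \<le> n" and k: "k \<le> n" and p: "0 < p"
    and d: "160000 \<le> p * n" and kd: "640 * ln n \<le> k * (p * n)"
  shows "real (n choose k) * real k ^ k * p ^ (k - 1) * exp (- (p * n * k / 80)) \<le> 1 / real n ^ 2"
proof -
  define d where "d = p * n"
  have "k \<noteq> 0" using kd n by (intro notI) simp
  then have pk: "p ^ (k - 1) = p ^ k / p" using p by (cases k) auto
  have "real (n choose k) * real k ^ k * p ^ (k - 1) * exp (- (d * k / 80))
      \<le> (exp 1 * real n) ^ k * p ^ (k - 1) * exp (- (d * k / 80))"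
    using binomial_mult_pow_le[OF k] p by (intro mult_right_mono) auto
  also have "\<dots> = (exp 1 * d) ^ k * exp (- (d * k / 80)) / p"
    unfolding pk d_def using p by (simp add: power_mult_distrib field_simps)
  also have "(exp 1 * d) ^ k = exp (k * (1 + ln d))"
    using d d_def by (simp add: exp_of_nat_mult exp_add)
  also have "exp (k * (1 + ln d)) * exp (- (d * k / 80)) \<le> exp (- (4 * ln n))"
  proof -
    have "k * (1 + ln d) \<le> k * (d / 160)"
      using one_plus_ln_le d d_def by (intro mult_left_mono) auto
    moreover have "640 * ln n \<le> k * d" using kd d_def by simp
    ultimately have "k * (1 + ln d) - d * k / 80 \<le> - (4 * ln n)" by (simp add: algebra_simps)
    then show ?thesis by (simp flip: exp_add)
  qed
  also have "exp (- (4 * ln n)) = 1 / real n ^ 4"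
  proof -
    have "exp (4 * ln (real n)) = exp (ln (real n)) ^ 4" using exp_of_nat_mult[of 4 "ln (real n)"] by simp
    then show ?thesis using n by (simp add: exp_minus divide_inverse)
  qed
  also have "1 / real n ^ 4 / p = n / d / real n ^ 4"
    using p n unfolding d_def by (simp add: field_simps)
  also have "\<dots> \<le> n / 1 / real n ^ 4"
    using d d_def by (intro divide_right_mono divide_left_mono) auto
  also have "\<dots> \<le> 1 / real n ^ 2"
    using n by (simp add: field_simps power_add[symmetric] eval_nat_numeral)
  finally show ?thesis using p unfolding d_def by (meson divide_right_mono less_imp_le)
qed

lemma sum_small_sets_le:
  fixes n :: nat and p :: real
  assumes n: "2 \<le> n" and p: "0 < p" and d: "160000 \<le> p * n"
  shows "(\<Sum>S\<in>{S. S \<subseteq> {1..n} \<and> 640 * ln n / (p * n) \<le> card S \<and> real (card S) \<le> 19 / 20 * n}.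
      real (card S) ^ card S * p ^ (card S - 1) * exp (- (p * n * card S / 80))) \<le> (n + 1) / n ^ 2"
proof -
  let ?I = "{S. S \<subseteq> {1..n} \<and> 640 * ln n / (p * n) \<le> card S \<and> real (card S) \<le> 19 / 20 * n}"
  let ?K = "{k \<in> {0..n}. 640 * ln n / (p * n) \<le> k}"
  define h where "h k = real k ^ k * p ^ (k - 1) * exp (- (p * n * k / 80))" for k :: nat
  have "(\<Sum>S\<in>?I. h (card S)) = (\<Sum>k\<in>?K. \<Sum>S\<in>{S \<in> ?I. card S = k}. h (card S))"
  proof (rule sum.group[symmetric])
    show "finite ?I" by (rule finite_subset[of _ "Pow {1..n}"]) auto
    have "card S \<le> n" if "S \<subseteq> {1..n}" for S
      using card_mono[OF finite_atLeastAtMost that] by simp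
    then show "card ` ?I \<subseteq> ?K" by auto
  qed simp
  also have "\<dots> \<le> (\<Sum>k\<in>?K. 1 / real n ^ 2)"
  proof (rule sum_mono)
    fix k assume k: "k \<in> ?K"
    have "card {S \<in> ?I. card S = k} \<le> card {S. S \<subseteq> {1..n} \<and> card S = k}"
      by (intro card_mono) (auto intro: finite_subset[of _ "Pow {1..n}"])
    also have "\<dots> = n choose k" using n_subsets[of "{1..n}" k] by simp
    finally have "real (card {S \<in> ?I. card S = k}) * h k \<le> real (n choose k) * h k"
      using p by (intro mult_right_mono) (auto simp: h_def)
    moreover have "640 * ln n \<le> k * (p * n)"
      using k p d by (simp add: pos_divide_le_eq)
    then have "real (n choose k) * h k \<le> 1 / real n ^ 2"
      using small_sets_term_le[OF n _ p d] k unfolding h_def by (simp add: mult_ac)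
    ultimately show "(\<Sum>S\<in>{S \<in> ?I. card S = k}. h (card S)) \<le> 1 / real n ^ 2" by simp
  qed
  also have "\<dots> \<le> (n + 1) / n ^ 2"
  proof -
    have "card ?K \<le> card {0..n}" by (rule card_mono) auto
    then show ?thesis by (simp add: divide_right_mono)
  qed
  finally show ?thesis by (simp add: h_def)
qed

lemma sum_large_sets_le:
  fixes n :: nat and p :: real
  assumes d: "20 \<le> p * n"
  shows "(\<Sum>S\<in>{S. S \<subseteq> {1..n} \<and> 19 / 20 * n \<le> real (card S)}. exp (- (p * n * n / 10))) \<le> exp (- real n)"
proof -
  let ?I = "{S. S \<subseteq> {1..n} \<and> 19 / 20 * n \<le> real (card S)}"
  have "card ?I \<le> card (Pow {1..n})" by (rule card_mono) auto
  then have "real (card ?I) \<le> 2 ^ n" by (simp add: card_Pow)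
  also have "(2::real) ^ n \<le> exp 1 ^ n"
    using exp_ge_add_one_self[of 1] by (intro power_mono) auto
  also have "\<dots> = exp (real n)" by (simp flip: exp_of_nat_mult)
  finally have card_I: "real (card ?I) \<le> exp (real n)" .
  have "20 * real n \<le> p * n * n" using d by (intro mult_right_mono) auto
  then have "exp (- (p * n * n / 10)) \<le> exp (- (2 * real n))" by simp
  with card_I have "real (card ?I) * exp (- (p * n * n / 10)) \<le> exp (real n) * exp (- (2 * real n))"
    by (intro mult_mono) auto
  then show ?thesis by (simp flip: exp_add)
qed

definition large_connected_sets_expand :: "real \<Rightarrow> real \<Rightarrow> nat \<Rightarrow> real \<Rightarrow> nat set set \<Rightarrow> bool" where
  "large_connected_sets_expand \<epsilon> c n p E \<longleftrightarrow>
     (\<forall>H. largest_component E n H \<longrightarrow>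
        (\<forall>S. S \<subseteq> H \<and> connected_set E S
             \<and> real (card S) \<ge> c * ln (real n) / (p * real n)
             \<and> real (deg_sum E S) \<le> real (deg_sum E H) / 2
             \<longrightarrow> real (e_out E S) \<ge> \<epsilon> * (p * real n) * real (card S)))"

lemma not_large_connected_sets_expand_cases:
  fixes \<epsilon> c p :: real
  assumes "\<not> large_connected_sets_expand \<epsilon> c n p E" and E: "E \<subseteq> all_edges n"
  shows "(\<exists>S. S \<subseteq> {1..n} \<and> c * ln n / (p * n) \<le> card S \<and> real (card S) \<le> 19 / 20 * n
            \<and> connected_set E S \<and> real (e_out E S) < \<epsilon> * (p * n) * card S)
       \<or> (\<exists>S. S \<subseteq> {1..n} \<and> 19 / 20 * n \<le> real (card S)
            \<and> card (E \<inter> inner_pairs S) \<le> card (E - inner_pairs S))"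
proof -
  obtain H S where H: "largest_component E n H" and SH: "S \<subseteq> H" and conn: "connected_set E S"
    and size: "c * ln n / (p * n) \<le> card S" and deg: "real (deg_sum E S) \<le> real (deg_sum E H) / 2"
    and few: "real (e_out E S) < \<epsilon> * (p * n) * card S"
    using assms(1) unfolding large_connected_sets_expand_def by (auto simp: not_le)
  have SV: "S \<subseteq> {1..n}" using H SH unfolding largest_component_def component_def by auto
  show ?thesis
  proof (cases "real (card S) \<le> 19 / 20 * n")
    case True
    then show ?thesis using SV size conn few by (intro disjI1 exI[of _ S]) simp
  next
    case False
    then show ?thesis
      using SV card_inner_edges_le_other_edges[OF E SV deg_sum_le_complement[OF H SH deg]]
      by (intro disjI2 exI[of _ S]) simp
  qed
qed

lemma prob_not_large_connected_sets_expand_le: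
  fixes n :: nat and p :: real
  assumes n: "3 \<le> n" and p: "0 < p" "p \<le> 1" and d: "160000 \<le> p * n"
  shows "gnp_prob n p (\<lambda>E. \<not> large_connected_sets_expand (1 / 80) 640 n p E)
    \<le> (n + 1) / n ^ 2 + exp (- real n)"
proof -
  let ?small = "{S. S \<subseteq> {1..n} \<and> 640 * ln n / (p * n) \<le> card S \<and> real (card S) \<le> 19 / 20 * n}"
  let ?large = "{S. S \<subseteq> {1..n} \<and> 19 / 20 * n \<le> real (card S)}"
  let ?few_out_edges = "\<lambda>S E. connected_set E S \<and> real (e_out E S) < p * n * card S / 80"
  let ?few_inner_edges = "\<lambda>S E. card (E \<inter> inner_pairs S) \<le> card (E - inner_pairs S)"
  have fin: "finite ?small" "finite ?large" by (auto intro: finite_subset[of _ "Pow {1..n}"])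
  have "gnp_prob n p (\<lambda>E. \<not> large_connected_sets_expand (1 / 80) 640 n p E)
      \<le> gnp_prob n p (\<lambda>E. (\<exists>S\<in>?small. ?few_out_edges S E) \<or> (\<exists>S\<in>?large. ?few_inner_edges S E))"
  proof (rule gnp_prob_mono)
    fix E assume "E \<subseteq> all_edges n" "\<not> large_connected_sets_expand (1 / 80) 640 n p E"
    from not_large_connected_sets_expand_cases[OF this(2,1)]
    show "(\<exists>S\<in>?small. ?few_out_edges S E) \<or> (\<exists>S\<in>?large. ?few_inner_edges S E)" by auto
  qed (use p in auto)
  also have "\<dots> \<le> gnp_prob n p (\<lambda>E. \<exists>S\<in>?small. ?few_out_edges S E) + gnp_prob n p (\<lambda>E. \<exists>S\<in>?large. ?few_inner_edges S E)"
    using p by (intro gnp_prob_disj_le) auto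
  also have "gnp_prob n p (\<lambda>E. \<exists>S\<in>?small. ?few_out_edges S E) \<le> (\<Sum>S\<in>?small. gnp_prob n p (?few_out_edges S))"
    using p fin by (intro gnp_prob_Bex_le) auto
  also have "\<dots> \<le> (\<Sum>S\<in>?small. real (card S) ^ card S * p ^ (card S - 1) * exp (- (p * n * card S / 80)))"
    using p by (intro sum_mono prob_connected_few_out_edges) auto
  also have "\<dots> \<le> (n + 1) / n ^ 2"
    using n p d by (intro sum_small_sets_le) auto
  also have "gnp_prob n p (\<lambda>E. \<exists>S\<in>?large. ?few_inner_edges S E) \<le> (\<Sum>S\<in>?large. gnp_prob n p (?few_inner_edges S))"
    using p fin by (intro gnp_prob_Bex_le) auto
  also have "\<dots> \<le> (\<Sum>S\<in>?large. exp (- (p * n * n / 10)))"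
    using n p by (intro sum_mono prob_inner_edges_minority) auto
  also have "\<dots> \<le> exp (- real n)"
    using d by (intro sum_large_sets_le) auto
  finally show ?thesis by simp
qed

lemma prob_large_connected_sets_expand_tendsto:
  fixes p :: "nat \<Rightarrow> real"
  assumes range: "eventually (\<lambda>n. 160000 / real n \<le> p n \<and> p n \<le> 2 * ln (real n) / real n) sequentially"
  shows "(\<lambda>n. gnp_prob n (p n) (large_connected_sets_expand (1 / 80) 640 n (p n))) \<longlonglongrightarrow> 1"
proof (rule tendsto_sandwich)
  let ?P = "\<lambda>n. gnp_prob n (p n) (large_connected_sets_expand (1 / 80) 640 n (p n))"
  let ?err = "\<lambda>n::nat. (n + 1) / n ^ 2 + exp (- real n)"
  have "eventually (\<lambda>n::nat. 2 * ln (real n) / real n \<le> 1) sequentially" by real_asymp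
  with range eventually_ge_at_top[of 3]
  have "eventually (\<lambda>n. 1 - ?err n \<le> ?P n \<and> ?P n \<le> 1) sequentially"
  proof eventually_elim
    case (elim n)
    have "0 < 160000 / real n" using elim by simp
    then have p: "0 < p n" "p n \<le> 1" using elim by linarith+
    have d: "160000 \<le> p n * n" using elim by (simp add: divide_le_eq)
    have "?P n + gnp_prob n (p n) (\<lambda>E. \<not> large_connected_sets_expand (1 / 80) 640 n (p n) E) = 1"
      by (rule gnp_prob_add_compl)
    moreover note prob_not_large_connected_sets_expand_le[OF \<open>3 \<le> n\<close> p d]
      gnp_prob_nonneg[of "p n" n "\<lambda>E. \<not> large_connected_sets_expand (1 / 80) 640 n (p n) E"]
    ultimately show ?case using p by (simp add: eta_contract_eq)
  qed
  then show "eventually (\<lambda>n. 1 - ?err n \<le> ?P n) sequentially" "eventually (\<lambda>n. ?P n \<le> 1) sequentially"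
    by (auto elim: eventually_mono)
  show "(\<lambda>n. 1 - ?err n) \<longlonglongrightarrow> 1" by real_asymp
qed simp

theorem lemma6:
  shows "\<exists>\<epsilon>::real>0. \<exists>c::real>0. \<exists>d0::real>1. \<forall>p::nat \<Rightarrow> real.
    eventually (\<lambda>n. d0 / real n \<le> p n \<and> p n \<le> 2 * ln (real n) / real n) sequentially \<longrightarrow>
    (\<lambda>n. gnp_prob n (p n) (\<lambda>E.
        \<forall>H. largest_component E n H \<longrightarrow>
          (\<forall>S. S \<subseteq> H \<and> connected_set E S
               \<and> real (card S) \<ge> c * ln (real n) / (p n * real n)
               \<and> real (deg_sum E S) \<le> real (deg_sum E H) / 2
               \<longrightarrow> real (e_out E S) \<ge> \<epsilon> * (p n * real n) * real (card S))))
      \<longlonglongrightarrow> 1"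
  unfolding large_connected_sets_expand_def[symmetric]
  by (intro exI[of _ "1 / 80"] exI[of _ 640] exI[of _ 160000] conjI allI impI
      prob_large_connected_sets_expand_tendsto) simp_all

end
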